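(* Let $1\le s\le d$ and let $J\subseteq J_{\mathbb C}$. Then $J\in\mathcal J(s,\mathbb C)$ if and only if there exist $V\in\mathcal G(s,d)$ and a block column echelon basis $W$ of $V$ (with data $r$, $b_1,\dots,b_r$, $k_1<\dots<k_r$) such that $$\{k_j+1:\ j\in\{1,\dots,r\},\ b_j=1,\ d_{k_j+1}=2\}=J.$$
   Context: Fix $d_1,\dots,d_k\in\{1,2\}$ with $d=d_1+\dots+d_k$ and let $J_{\mathbb C}=\{j\in\{1,\dots,k\}:d_j=2\}$. Define $\mathcal J(s,\mathbb C)=\{J\subseteq J_{\mathbb C}:\ |J|\le\min(s,d-s),\ \text{and } s-|J| \text{ is even if } |J_{\mathbb C}|=k\}$. Block column echelon basis: the rows of $W\in\mathbb R^{d\times s}$ are partitioned into consecutive blocks of sizes $d_1,\dots,d_k$. A block column echelon basis of $V\in\mathcal G(s,d)$ is a $W\in\mathbb R^{d\times s}$ with $\mathrm{range}(W)=V$ whose columns are partitioned into consecutive groups of sizes $b_1,\dots,b_r\in\{1,2\}$, $\sum_jb_j=s$, such that, writing $W_{ij}\in\mathbb R^{d_i\times b_j}$ for the resulting blocks, there are indices $0\le k_1<\dots<k_r<k$ with $W_{ij}=0$ for $i\le k_j$ and $\mathrm{rank}(W_{k_j+1,j})=b_j$ (so $b_j=1$ whenever $d_{k_j+1}=1$). $\mathcal G(s,d)$ is the Grassmannian of $s$-dimensional subspaces of $\mathbb R^d$. *)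

theory Defs
  imports "HOL-Analysis.Analysis" "Jordan_Normal_Form.DL_Rank"
begin

(* Conventions: the block sizes d_1,...,d_k are given by dd :: nat => nat on {1..k}
   (1-based, as in the paper).  Column groups b_1,...,b_r and indices k_1<...<k_r are
   given by b, kk :: nat => nat on {1..r}.  Matrices are Jordan_Normal_Form matrices,
   with 0-based row/column indices. *)

definition total_dim :: "nat \<Rightarrow> (nat \<Rightarrow> nat) \<Rightarrow> nat" where
  "total_dim k dd = (\<Sum>l=1..k. dd l)"

definition JC :: "nat \<Rightarrow> (nat \<Rightarrow> nat) \<Rightarrow> nat set" where
  "JC k dd = {j \<in> {1..k}. dd j = 2}"

definition calJ :: "nat \<Rightarrow> (nat \<Rightarrow> nat) \<Rightarrow> nat \<Rightarrow> nat set set" where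
  "calJ k dd s = {J. J \<subseteq> JC k dd \<and> card J \<le> min s (total_dim k dd - s)
                     \<and> (card (JC k dd) = k \<longrightarrow> even (s - card J))}"

definition grassmannian :: "nat \<Rightarrow> nat \<Rightarrow> real vec set set" where
  "grassmannian s d = {V. subspace (class_ring :: real ring) V (module_vec TYPE(real) d)
      \<and> vectorspace.dim (class_ring :: real ring) ((module_vec TYPE(real) d)\<lparr>carrier := V\<rparr>) = s}"

definition blk_off :: "(nat \<Rightarrow> nat) \<Rightarrow> nat \<Rightarrow> nat" where
  "blk_off c i = (\<Sum>l=1..<i. c l)"

definition blk :: "real mat \<Rightarrow> (nat \<Rightarrow> nat) \<Rightarrow> (nat \<Rightarrow> nat) \<Rightarrow> nat \<Rightarrow> nat \<Rightarrow> real mat" where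
  "blk W dd b i j = mat (dd i) (b j) (\<lambda>(p,q). W $$ (blk_off dd i + p, blk_off b j + q))"

definition is_bce_basis :: "nat \<Rightarrow> (nat \<Rightarrow> nat) \<Rightarrow> nat \<Rightarrow> real vec set \<Rightarrow> real mat
     \<Rightarrow> nat \<Rightarrow> (nat \<Rightarrow> nat) \<Rightarrow> (nat \<Rightarrow> nat) \<Rightarrow> bool" where
  "is_bce_basis k dd s V W r b kk \<longleftrightarrow>
     W \<in> carrier_mat (total_dim k dd) s
   \<and> (vec_space.col_space (total_dim k dd) W :: real vec set) = V
   \<and> (\<forall>j\<in>{1..r}. b j \<in> {1,2})
   \<and> (\<Sum>j=1..r. b j) = s
   \<and> (\<forall>j\<in>{1..r}. \<forall>j'\<in>{1..r}. j < j' \<longrightarrow> kk j < kk j')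
   \<and> (\<forall>j\<in>{1..r}. kk j < k)
   \<and> (\<forall>j\<in>{1..r}. \<forall>i\<in>{1..kk j}. blk W dd b i j = 0\<^sub>m (dd i) (b j))
   \<and> (\<forall>j\<in>{1..r}. vec_space.rank (dd (kk j + 1)) (blk W dd b (kk j + 1) j) = b j)"

end

theory Submission
  imports Defs
begin

text \<open>In a block column echelon basis the group sizes satisfy \<open>1 \<le> b\<^sub>j \<le> d\<^bsub>k\<^sub>j+1\<^esub>\<close> (the pivot
  block has rank \<open>b\<^sub>j\<close>) and the pivot blocks \<open>k\<^sub>j+1\<close> are distinct. Hence
  \<open>s + |J| \<le> \<Sum>\<^sub>j d\<^bsub>k\<^sub>j+1\<^esub> \<le> d\<close>, \<open>|J| \<le> r \<le> s\<close>, and when all \<open>d\<^sub>i = 2\<close> the number \<open>s - |J|\<close> counts the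
  columns in groups of size two, so it is even. Conversely, for admissible \<open>J\<close> take pivot blocks
  \<open>J \<union> A \<union> C\<close> with groups of size two on \<open>A \<subseteq> J\<^sub>\<complex> - J\<close> and of size one on \<open>J\<close> and on blocks
  \<open>C\<close> of size one, with \<open>|J| + 2|A| + |C| = s\<close>; the matrix whose columns are the matching
  standard basis vectors is then a block column echelon basis realising \<open>J\<close>.\<close>

lemma rank_eq_if_left_invertible:
  fixes A B :: "'a::field mat"
  assumes A: "A \<in> carrier_mat n m" and B: "B \<in> carrier_mat m n" and BA: "B * A = 1\<^sub>m m"
  shows "vec_space.rank n A = m"
proof -
  interpret vs: vec_space "TYPE('a)" n .
  have col: "B *\<^sub>v col A i = unit_vec m i" if "i < m" for i
    using A B that col_mult2[OF B A, of i] BA by simp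
  have "distinct (cols A)"
  proof -
    have "i = j" if "i < m" "j < m" "col A i = col A j" for i j
    proof -
      have "(unit_vec m i :: 'a vec) $ i = unit_vec m j $ i" using col that by metis
      then show "i = j" using that by (auto split: if_splits)
    qed
    then show ?thesis using A unfolding distinct_conv_nth by (simp add: cols_def) blast
  qed
  moreover have "vs.lin_indpt (set (cols A))"
  proof
    assume "vs.lin_dep (set (cols A))"
    then obtain v where v: "v \<in> carrier_vec m" "v \<noteq> 0\<^sub>v m" "A *\<^sub>v v = 0\<^sub>v n"
      using vs.lin_depE[OF A _ \<open>distinct (cols A)\<close>] by blast
    have "v = (B * A) *\<^sub>v v" using BA v(1) by simp
    also have "\<dots> = B *\<^sub>v (A *\<^sub>v v)" using A B v(1) by (simp add: assoc_mult_mat_vec)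
    also have "\<dots> = 0\<^sub>v m" using v(3) B by (intro eq_vecI) (auto simp: scalar_prod_def)
    finally show False using v(2) by simp
  qed
  ultimately show ?thesis using vs.lin_indpt_full_rank[OF A] by blast
qed

lemma rank_le_dim_row:
  fixes A :: "'a::field mat"
  assumes A: "A \<in> carrier_mat n m"
  shows "vec_space.rank n A \<le> n"
proof -
  interpret vs: vec_space "TYPE('a)" n .
  have cols: "set (cols A) \<subseteq> carrier_vec n" using A cols_dim by blast
  have "vs.rank A = vectorspace.dim class_ring (vs.vs (vs.span (set (cols A))))"
    unfolding vs.rank_def by simp
  also have "\<dots> \<le> vs.dim"
    using vs.subspace_dim[OF vs.span_is_subspace[OF cols] vs.fin_dim] vs.fin_dim_span[of "set (cols A)"] cols
    by simp
  also have "\<dots> = n" by (rule vs.dim_is_n)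
  finally show ?thesis .
qed

definition selection_mat :: "nat \<Rightarrow> nat \<Rightarrow> (nat \<Rightarrow> nat) \<Rightarrow> 'a::zero_neq_one mat" where
  "selection_mat n m g = mat n m (\<lambda>(x, c). if x = g c then 1 else 0)"

lemma selection_mat_carrier [simp]: "selection_mat n m g \<in> carrier_mat n m"
  by (simp add: selection_mat_def)

lemma rank_selection_mat:
  assumes inj: "inj_on g {..<m}" and range: "\<And>c. c < m \<Longrightarrow> g c < n"
  shows "vec_space.rank n (selection_mat n m g :: 'a::field mat) = m"
proof -
  let ?A = "selection_mat n m g :: 'a mat"
  have "?A\<^sup>T * ?A = 1\<^sub>m m"
  proof (rule eq_matI)
    fix i j assume "i < dim_row (1\<^sub>m m :: 'a mat)" "j < dim_col (1\<^sub>m m :: 'a mat)"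
    then have i: "i < m" and j: "j < m" by auto
    have "(?A\<^sup>T * ?A) $$ (i, j) = (\<Sum>x<n. (if x = g i then 1 else 0) * (if x = g j then 1 else 0))"
      using i j by (simp add: selection_mat_def scalar_prod_def atLeast0LessThan)
    also have "\<dots> = (\<Sum>x<n. if x = g i then (if g i = g j then 1 else 0) else 0)"
      by (rule sum.cong) auto
    also have "\<dots> = 1\<^sub>m m $$ (i, j)"
      using range[OF i] i j inj by (auto simp: inj_on_def)
    finally show "(?A\<^sup>T * ?A) $$ (i, j) = 1\<^sub>m m $$ (i, j)" .
  qed (auto simp: selection_mat_def)
  then show ?thesis by (intro rank_eq_if_left_invertible[of _ n m "?A\<^sup>T"]) auto
qed

lemma col_space_in_grassmannian:
  fixes W :: "real mat"
  assumes "W \<in> carrier_mat d n"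
  shows "vec_space.col_space d W \<in> grassmannian (vec_space.rank d W) d"
proof -
  interpret vs: vec_space "TYPE(real)" d .
  have "set (cols W) \<subseteq> carrier_vec d" using assms cols_dim by blast
  then show ?thesis
    using vs.span_is_subspace
    unfolding grassmannian_def vs.col_space_def vs.rank_def by simp
qed

lemma blk_off_Suc: "1 \<le> j \<Longrightarrow> blk_off c (Suc j) = blk_off c j + c j"
  unfolding blk_off_def by (simp add: sum.atLeastLessThan_Suc)

lemma blk_off_Suc_eq_sum: "blk_off c (Suc r) = (\<Sum>j=1..r. c j)"
  unfolding blk_off_def by (simp add: atLeastLessThanSuc_atLeastAtMost)

lemma blk_off_mono: "i \<le> j \<Longrightarrow> blk_off c i \<le> blk_off c j"
  unfolding blk_off_def by (rule sum_mono2) auto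

lemma blk_off_add_less: "1 \<le> i \<Longrightarrow> i < j \<Longrightarrow> x < c i \<Longrightarrow> blk_off c i + x < blk_off c j"
  using blk_off_Suc[of i c] blk_off_mono[of "Suc i" j c] by simp

lemma blk_off_add_eq_iff:
  assumes "1 \<le> i" "1 \<le> i'" "x < c i" "x' < c i'"
  shows "blk_off c i + x = blk_off c i' + x' \<longleftrightarrow> i = i' \<and> x = x'"
  using blk_off_add_less[of i i' x c] blk_off_add_less[of i' i x' c] assms
  by (cases i i' rule: linorder_cases) auto

definition blk_idx :: "(nat \<Rightarrow> nat) \<Rightarrow> nat \<Rightarrow> nat" where
  "blk_idx c x = (LEAST j. x < blk_off c (Suc j))"

lemma blk_idx_blk_off_add:
  assumes "1 \<le> j" "q < c j"
  shows "blk_idx c (blk_off c j + q) = j"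
  unfolding blk_idx_def
proof (rule Least_equality)
  show "blk_off c j + q < blk_off c (Suc j)" using assms blk_off_Suc[of j c] by simp
  show "j \<le> y" if "blk_off c j + q < blk_off c (Suc y)" for y
    using that blk_off_mono[of "Suc y" j c] by (cases "j \<le> y") auto
qed

lemma blk_off_decompose:
  assumes "x < blk_off c (Suc r)"
  obtains j q where "1 \<le> j" "j \<le> r" "q < c j" "x = blk_off c j + q"
proof -
  let ?j = "blk_idx c x"
  have upper: "x < blk_off c (Suc ?j)" unfolding blk_idx_def by (rule LeastI[of _ r]) (rule assms)
  have "?j \<le> r" unfolding blk_idx_def by (rule Least_le) (rule assms)
  have "1 \<le> ?j" using upper by (cases ?j) (auto simp: blk_off_def)
  have "\<not> x < blk_off c (Suc (?j - 1))"
    using Least_le[of "\<lambda>j. x < blk_off c (Suc j)" "?j - 1"] \<open>1 \<le> ?j\<close> unfolding blk_idx_def by fastforce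
  then have "blk_off c ?j \<le> x" using \<open>1 \<le> ?j\<close> by simp
  then show thesis
    using that[of ?j "x - blk_off c ?j"] \<open>1 \<le> ?j\<close> \<open>?j \<le> r\<close> upper blk_off_Suc[of ?j c] by simp
qed

locale pivot_pattern =
  fixes k :: nat and dd :: "nat \<Rightarrow> nat" and r :: nat and b p :: "nat \<Rightarrow> nat"
  assumes p_range: "j \<in> {1..r} \<Longrightarrow> p j \<in> {1..k}"
    and p_strict: "j \<in> {1..r} \<Longrightarrow> j' \<in> {1..r} \<Longrightarrow> j < j' \<Longrightarrow> p j < p j'"
    and b_range: "j \<in> {1..r} \<Longrightarrow> b j \<in> {1, 2}"
    and b_le: "j \<in> {1..r} \<Longrightarrow> b j \<le> dd (p j)"
begin

abbreviation d :: nat where "d \<equiv> total_dim k dd"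

abbreviation s :: nat where "s \<equiv> \<Sum>j=1..r. b j"

lemma p_inj: "inj_on p {1..r}"
  by (rule inj_onI) (metis linorder_cases p_strict less_irrefl)

lemma d_eq_blk_off: "d = blk_off dd (Suc k)"
  unfolding total_dim_def blk_off_Suc_eq_sum ..

lemma s_eq_blk_off: "s = blk_off b (Suc r)"
  unfolding blk_off_Suc_eq_sum ..

text \<open>Column \<open>q\<close> of column group \<open>j\<close> is sent to row \<open>q\<close> of row block \<open>p j\<close>.\<close>

definition row_of :: "nat \<Rightarrow> nat" where
  "row_of x = blk_off dd (p (blk_idx b x)) + (x - blk_off b (blk_idx b x))"

lemma row_of_blk_off_add:
  assumes "j \<in> {1..r}" "q < b j"
  shows "row_of (blk_off b j + q) = blk_off dd (p j) + q"
  using assms by (simp add: row_of_def blk_idx_blk_off_add)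

lemma row_of_inj: "inj_on row_of {..<s}"
proof (rule inj_onI)
  fix x y assume "x \<in> {..<s}" "y \<in> {..<s}" and eq: "row_of x = row_of y"
  then obtain j q j' q' where
    j: "1 \<le> j" "j \<le> r" "q < b j" "x = blk_off b j + q" and
    j': "1 \<le> j'" "j' \<le> r" "q' < b j'" "y = blk_off b j' + q'"
    using s_eq_blk_off by (auto elim!: blk_off_decompose)
  have "blk_off dd (p j) + q = blk_off dd (p j') + q'"
    using eq j j' by (simp add: row_of_blk_off_add)
  then have "p j = p j' \<and> q = q'"
    using blk_off_add_eq_iff p_range b_le j j' by (metis atLeastAtMost_iff order.strict_trans2)
  then show "x = y" using inj_onD[OF p_inj] j j' by auto
qed

lemma row_of_less:
  assumes "x < s"
  shows "row_of x < d"
proof -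
  obtain j q where j: "1 \<le> j" "j \<le> r" "q < b j" "x = blk_off b j + q"
    using assms s_eq_blk_off by (auto elim!: blk_off_decompose)
  have "p j \<in> {1..k}" "q < dd (p j)" using p_range b_le j by fastforce+
  then have "blk_off dd (p j) + q < blk_off dd (Suc k)" by (intro blk_off_add_less) auto
  then show ?thesis using j d_eq_blk_off by (simp add: row_of_blk_off_add)
qed

definition W :: "real mat" where
  "W = selection_mat d s row_of"

lemma blk_W:
  assumes i: "i \<in> {1..k}" and j: "j \<in> {1..r}"
  shows "blk W dd b i j = (if i = p j then selection_mat (dd i) (b j) id else 0\<^sub>m (dd i) (b j))"
proof (rule eq_matI)
  fix x q assume "x < dim_row (if i = p j then selection_mat (dd i) (b j) id else 0\<^sub>m (dd i) (b j))"
    and "q < dim_col (if i = p j then selection_mat (dd i) (b j) id else 0\<^sub>m (dd i) (b j))"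
  then have x: "x < dd i" and q: "q < b j" by (auto simp: selection_mat_def split: if_splits)
  have "p j \<in> {1..k}" "q < dd (p j)" using p_range b_le j q by fastforce+
  then have "blk_off dd i + x = blk_off dd (p j) + q \<longleftrightarrow> i = p j \<and> x = q"
    using i x by (intro blk_off_add_eq_iff) auto
  moreover have "blk_off dd i + x < d"
    using i x d_eq_blk_off by (simp add: blk_off_add_less)
  moreover have "blk_off b j + q < s"
    using j q s_eq_blk_off by (simp add: blk_off_add_less)
  ultimately show "blk W dd b i j $$ (x, q)
      = (if i = p j then selection_mat (dd i) (b j) id else 0\<^sub>m (dd i) (b j)) $$ (x, q)"
    using j x q by (cases "i = p j") (auto simp: blk_def W_def selection_mat_def row_of_blk_off_add)
qed (auto simp: blk_def selection_mat_def)

lemma rank_W: "vec_space.rank d W = s"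
  unfolding W_def by (rule rank_selection_mat[OF row_of_inj row_of_less]) simp

lemma W_is_bce_basis: "is_bce_basis k dd s (vec_space.col_space d W) W r b (\<lambda>j. p j - 1)"
proof -
  have pivot: "p j - 1 + 1 = p j" "p j - 1 < k" if "j \<in> {1..r}" for j
    using p_range[OF that] by auto
  have "p j - 1 < p j' - 1" if "j \<in> {1..r}" "j' \<in> {1..r}" "j < j'" for j j'
    using p_strict[OF that] p_range[OF that(1)] by (simp add: diff_less_mono)
  moreover have zero: "blk W dd b i j = 0\<^sub>m (dd i) (b j)" if "j \<in> {1..r}" "i \<in> {1..p j - 1}" for i j
    using that p_range[OF that(1)] by (subst blk_W) auto
  moreover have "vec_space.rank (dd (p j)) (blk W dd b (p j) j) = b j" if "j \<in> {1..r}" for j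
    using that p_range[OF that] b_le[OF that] by (simp add: blk_W rank_selection_mat)
  ultimately show ?thesis
    unfolding is_bce_basis_def using b_range pivot by (auto simp: W_def)
qed

end

lemma finite_strict_enumeration:
  fixes P :: "nat set"
  assumes "finite P"
  obtains p where "p ` {1..card P} = P"
    and "\<And>j j'. j \<in> {1..card P} \<Longrightarrow> j' \<in> {1..card P} \<Longrightarrow> j < j' \<Longrightarrow> p j < p j'"
proof
  let ?L = "sorted_list_of_set P"
  have len: "length ?L = card P" by simp
  show "(\<lambda>j. ?L ! (j - 1)) ` {1..card P} = P"
  proof -
    have "(\<lambda>j. ?L ! (j - 1)) ` {1..card P} = set ?L"
      unfolding set_conv_nth len by (force intro: image_eqI[of _ _ "Suc _"])
    then show ?thesis using assms by simp
  qed
  show "?L ! (j - 1) < ?L ! (j' - 1)" if "j \<in> {1..card P}" "j' \<in> {1..card P}" "j < j'" for j j'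
    using that by (intro sorted_wrt_nth_less[OF strict_sorted_list_of_set]) auto
qed

lemma bce_basis_with_pivots:
  assumes P: "P \<subseteq> {1..k}" and bb: "\<And>i. i \<in> P \<Longrightarrow> bb i \<in> {1, 2} \<and> bb i \<le> dd i"
  shows "\<exists>V W r b kk. V \<in> grassmannian (\<Sum>i\<in>P. bb i) (total_dim k dd)
    \<and> is_bce_basis k dd (\<Sum>i\<in>P. bb i) V W r b kk
    \<and> {kk j + 1 | j. j \<in> {1..r} \<and> b j = 1 \<and> dd (kk j + 1) = 2} = {i \<in> P. bb i = 1 \<and> dd i = 2}"
proof -
  have "finite P" using P finite_subset by blast
  obtain p where img: "p ` {1..card P} = P"
    and strict: "\<And>j j'. j \<in> {1..card P} \<Longrightarrow> j' \<in> {1..card P} \<Longrightarrow> j < j' \<Longrightarrow> p j < p j'"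
    using finite_strict_enumeration[OF \<open>finite P\<close>] by blast
  have pP: "p j \<in> P" if "j \<in> {1..card P}" for j using img that by blast
  interpret pivot_pattern k dd "card P" "bb \<circ> p" p
  proof
    fix j j' assume j: "j \<in> {1..card P}"
    show "p j \<in> {1..k}" using pP[OF j] P by blast
    show "(bb \<circ> p) j \<in> {1, 2}" "(bb \<circ> p) j \<le> dd (p j)" using bb[OF pP[OF j]] by auto
    show "j' \<in> {1..card P} \<Longrightarrow> j < j' \<Longrightarrow> p j < p j'" by (rule strict[OF j])
  qed
  have s: "(\<Sum>j=1..card P. (bb \<circ> p) j) = (\<Sum>i\<in>P. bb i)"
    using sum.reindex[OF p_inj, of bb] img by simp
  have "vec_space.col_space d W \<in> grassmannian (\<Sum>i\<in>P. bb i) d"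
    using col_space_in_grassmannian[of W d s] rank_W s by (simp add: W_def)
  moreover have "is_bce_basis k dd (\<Sum>i\<in>P. bb i) (vec_space.col_space d W) W (card P) (bb \<circ> p) (\<lambda>j. p j - 1)"
    using W_is_bce_basis s by simp
  moreover have "{p j - 1 + 1 | j. j \<in> {1..card P} \<and> (bb \<circ> p) j = 1 \<and> dd (p j - 1 + 1) = 2}
      = {i \<in> P. bb i = 1 \<and> dd i = 2}"
  proof -
    have "p j - 1 + 1 = p j" if "j \<in> {1..card P}" for j using p_range[OF that] by simp
    then have "{p j - 1 + 1 | j. j \<in> {1..card P} \<and> (bb \<circ> p) j = 1 \<and> dd (p j - 1 + 1) = 2}
        = {i \<in> p ` {1..card P}. bb i = 1 \<and> dd i = 2}"
      by (auto simp: image_iff) (metis comp_apply)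
    then show ?thesis unfolding img .
  qed
  ultimately show ?thesis by blast
qed

lemma total_dim_eq_card_JC:
  assumes dd: "\<forall>i\<in>{1..k}. dd i \<in> {1, 2}"
  shows "total_dim k dd = 2 * card (JC k dd) + card ({1..k} - JC k dd)"
proof -
  have sub: "JC k dd \<subseteq> {1..k}" unfolding JC_def by blast
  have "total_dim k dd = (\<Sum>i\<in>JC k dd. dd i) + (\<Sum>i\<in>{1..k} - JC k dd. dd i)"
    unfolding total_dim_def using sub by (metis finite_atLeastAtMost sum.subset_diff add.commute)
  also have "\<dots> = (\<Sum>i\<in>JC k dd. 2) + (\<Sum>i\<in>{1..k} - JC k dd. 1)"
    using dd by (intro arg_cong2[where f = "(+)"] sum.cong) (auto simp: JC_def)
  finally show ?thesis by simp
qed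

lemma split_into_ones_and_twos:
  fixes m s n1 n2 :: nat
  assumes "m \<le> s" "s + m \<le> 2 * n2 + n1" "m \<le> n2" "n1 = 0 \<Longrightarrow> even (s - m)"
  obtains a c where "a \<le> n2 - m" "c \<le> n1" "s = m + 2 * a + c"
proof (cases "n1 = 0")
  case True
  then obtain a where "s - m = 2 * a" using assms(4) by blast
  then show thesis using that[of a 0] assms True by auto
next
  case False
  define a where "a = min ((s - m) div 2) (n2 - m)"
  show thesis by (rule that[of a "s - m - 2 * a"]) (use assms False in \<open>auto simp: a_def min_def\<close>)
qed

lemma calJ_pivot_choice:
  assumes dd: "\<forall>i\<in>{1..k}. dd i \<in> {1, 2}"
    and J: "J \<in> calJ k dd s" and s: "s \<le> total_dim k dd"
  obtains P bb where "P \<subseteq> {1..k}" "\<And>i. i \<in> P \<Longrightarrow> bb i \<in> {1, 2} \<and> bb i \<le> dd i"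
    "(\<Sum>i\<in>P. bb i) = s" "{i \<in> P. bb i = 1 \<and> dd i = 2} = J"
proof -
  let ?O = "{1..k} - JC k dd"
  have JC: "JC k dd \<subseteq> {1..k}" "finite (JC k dd)" unfolding JC_def by auto
  have JJC: "J \<subseteq> JC k dd" and bounds: "card J \<le> s" "card J \<le> total_dim k dd - s"
    and par: "card (JC k dd) = k \<longrightarrow> even (s - card J)"
    using J unfolding calJ_def by auto
  have "finite J" using JJC JC finite_subset by blast
  have "card (JC k dd) \<le> k" using card_mono[OF _ JC(1)] by simp
  then have "card ?O = k - card (JC k dd)" using card_Diff_subset[OF JC(2,1)] by simp
  moreover have "s + card J \<le> 2 * card (JC k dd) + card ?O"
    using bounds(2) s total_dim_eq_card_JC[OF dd] by linarith
  ultimately obtain a c where ac: "a \<le> card (JC k dd) - card J" "c \<le> card ?O" "s = card J + 2 * a + c"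
    using split_into_ones_and_twos[of "card J" s "card (JC k dd)" "card ?O"]
      bounds(1) par card_mono[OF JC(2) JJC] \<open>card (JC k dd) \<le> k\<close> by auto
  obtain A where A: "A \<subseteq> JC k dd - J" "card A = a" "finite A"
    using ac(1) card_Diff_subset[OF \<open>finite J\<close> JJC] obtain_subset_with_card_n by metis
  obtain C where C: "C \<subseteq> ?O" "card C = c" "finite C"
    using ac(2) obtain_subset_with_card_n by metis
  let ?bb = "\<lambda>i. if i \<in> A then 2 else 1 :: nat"
  have disj: "J \<inter> A = {}" "(J \<union> A) \<inter> C = {}" using A C JJC by blast+
  have P: "J \<union> A \<union> C \<subseteq> {1..k}" using JJC A C JC by blast
  have bb: "?bb i \<in> {1, 2} \<and> ?bb i \<le> dd i" if "i \<in> J \<union> A \<union> C" for i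
  proof -
    have "dd i \<in> {1, 2}" using that dd P by blast
    then show ?thesis using A by (auto simp: JC_def)
  qed
  have "(\<Sum>i\<in>J \<union> A \<union> C. ?bb i) = (\<Sum>i\<in>J. ?bb i) + (\<Sum>i\<in>A. ?bb i) + (\<Sum>i\<in>C. ?bb i)"
    using \<open>finite J\<close> A(3) C(3) disj by (simp add: sum.union_disjoint)
  also have "\<dots> = (\<Sum>i\<in>J. 1) + (\<Sum>i\<in>A. 2) + (\<Sum>i\<in>C. 1)"
    using disj by (intro arg_cong2[where f = "(+)"] sum.cong) auto
  also have "\<dots> = s" using ac(3) A(2) C(2) by simp
  finally have sum: "(\<Sum>i\<in>J \<union> A \<union> C. ?bb i) = s" .
  have "{i \<in> J \<union> A \<union> C. ?bb i = 1 \<and> dd i = 2} = J"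
    using JJC A C disj by (auto simp: JC_def)
  with P bb sum show thesis by (rule that)
qed

lemma even_sum_minus_card_ones:
  fixes b :: "'a \<Rightarrow> nat"
  assumes "finite I" and b: "\<And>j. j \<in> I \<Longrightarrow> b j \<in> {1, 2}"
  shows "even ((\<Sum>j\<in>I. b j) - card {j \<in> I. b j = 1})"
proof -
  have ones: "{j \<in> I. b j = 1} = I \<inter> {j. b j = 1}" by blast
  have "(\<Sum>j\<in>I. b j) = (\<Sum>j\<in>I \<inter> {j. b j = 1}. b j) + (\<Sum>j\<in>I \<inter> - {j. b j = 1}. b j)"
    using sum.If_cases[OF assms(1), of "\<lambda>j. b j = 1" b b] by simp
  also have "\<dots> = card (I \<inter> {j. b j = 1}) + 2 * card (I \<inter> - {j. b j = 1})"
  proof -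
    have "(\<Sum>j\<in>I \<inter> - {j. b j = 1}. b j) = (\<Sum>j\<in>I \<inter> - {j. b j = 1}. 2)"
      using b by (intro sum.cong) auto
    then show ?thesis by simp
  qed
  finally show ?thesis unfolding ones by simp
qed

lemma JC_eq_if_card_eq:
  assumes "card (JC k dd) = k"
  shows "JC k dd = {1..k}"
  using assms by (intro card_subset_eq) (auto simp: JC_def)

context
  fixes k s :: nat and dd :: "nat \<Rightarrow> nat" and V W r b kk
  assumes bce: "is_bce_basis k dd s V W r b kk"
begin

lemma bce_pivot_inj: "inj_on (\<lambda>j. kk j + 1) {1..r}"
  using bce unfolding is_bce_basis_def
  by (intro inj_onI) (metis linorder_cases less_irrefl add_right_cancel)

lemma bce_group_le_block:
  assumes "j \<in> {1..r}"
  shows "b j \<le> dd (kk j + 1)"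
proof -
  have "blk W dd b (kk j + 1) j \<in> carrier_mat (dd (kk j + 1)) (b j)" by (simp add: blk_def)
  then show ?thesis using rank_le_dim_row bce assms unfolding is_bce_basis_def by metis
qed

lemma bce_pivot_dim_bound: "s + card {j \<in> {1..r}. b j = 1 \<and> dd (kk j + 1) = 2} \<le> total_dim k dd"
proof -
  let ?S = "{j \<in> {1..r}. b j = 1 \<and> dd (kk j + 1) = 2}"
  have s: "s = (\<Sum>j=1..r. b j)" and klt: "\<forall>j\<in>{1..r}. kk j < k"
    using bce unfolding is_bce_basis_def by auto
  have "s + card ?S = (\<Sum>j=1..r. b j + (if j \<in> ?S then 1 else 0))"
    unfolding s by (simp add: sum.distrib sum.If_cases Int_def)
  also have "\<dots> \<le> (\<Sum>j=1..r. dd (kk j + 1))"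
    using bce_group_le_block by (intro sum_mono) force
  also have "\<dots> = (\<Sum>i\<in>(\<lambda>j. kk j + 1) ` {1..r}. dd i)"
    using sum.reindex[OF bce_pivot_inj, of dd] by (simp add: comp_def)
  also have "\<dots> \<le> (\<Sum>i=1..k. dd i)"
    using klt by (intro sum_mono2) auto
  finally show ?thesis unfolding total_dim_def .
qed

lemma bce_pivots_in_calJ: "{kk j + 1 | j. j \<in> {1..r} \<and> b j = 1 \<and> dd (kk j + 1) = 2} \<in> calJ k dd s"
proof -
  let ?S = "{j \<in> {1..r}. b j = 1 \<and> dd (kk j + 1) = 2}"
  have s: "s = (\<Sum>j=1..r. b j)" and klt: "\<forall>j\<in>{1..r}. kk j < k"
    and b: "\<forall>j\<in>{1..r}. b j \<in> {1, 2}"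
    using bce unfolding is_bce_basis_def by auto
  have img: "{kk j + 1 | j. j \<in> {1..r} \<and> b j = 1 \<and> dd (kk j + 1) = 2} = (\<lambda>j. kk j + 1) ` ?S"
    by auto
  have "card ((\<lambda>j. kk j + 1) ` ?S) = card ?S"
    by (rule card_image, rule inj_on_subset[OF bce_pivot_inj]) auto
  moreover have "(\<lambda>j. kk j + 1) ` ?S \<subseteq> JC k dd"
    using klt by (auto simp: JC_def Suc_le_eq)
  moreover have "card ?S \<le> s"
  proof -
    have "card ?S \<le> card {1..r}" by (intro card_mono) auto
    also have "\<dots> = (\<Sum>j=1..r. 1)" by simp
    also have "\<dots> \<le> s" unfolding s using b by (intro sum_mono) fastforce
    finally show ?thesis .
  qed
  moreover have "even (s - card ?S)" if "card (JC k dd) = k"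
  proof -
    have "dd (kk j + 1) = 2" if "j \<in> {1..r}" for j
    proof -
      have "kk j + 1 \<in> JC k dd" using JC_eq_if_card_eq[OF \<open>card (JC k dd) = k\<close>] klt that by (auto simp: Suc_le_eq)
      then show ?thesis by (simp add: JC_def)
    qed
    then have "?S = {j \<in> {1..r}. b j = 1}" by auto
    then show ?thesis unfolding s using even_sum_minus_card_ones[of "{1..r}" b] b by simp
  qed
  ultimately show ?thesis
    using bce_pivot_dim_bound unfolding img calJ_def by auto
qed

end

theorem lemma4p13:
  fixes k s :: nat and dd :: "nat \<Rightarrow> nat" and J :: "nat set"
  assumes "\<forall>i\<in>{1..k}. dd i \<in> {1,2}"
    and "1 \<le> s" and "s \<le> total_dim k dd"
    and "J \<subseteq> JC k dd"
  shows "J \<in> calJ k dd s \<longleftrightarrow>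
    (\<exists>V W r b kk. V \<in> grassmannian s (total_dim k dd) \<and> is_bce_basis k dd s V W r b kk
       \<and> {kk j + 1 | j. j \<in> {1..r} \<and> b j = 1 \<and> dd (kk j + 1) = 2} = J)"
proof
  assume "J \<in> calJ k dd s"
  then obtain P bb where P: "P \<subseteq> {1..k}" and bb: "\<And>i. i \<in> P \<Longrightarrow> bb i \<in> {1, 2} \<and> bb i \<le> dd i"
    and sum: "(\<Sum>i\<in>P. bb i) = s" and pivots: "{i \<in> P. bb i = 1 \<and> dd i = 2} = J"
    using calJ_pivot_choice[OF assms(1) _ assms(3)] by blast
  show "\<exists>V W r b kk. V \<in> grassmannian s (total_dim k dd) \<and> is_bce_basis k dd s V W r b kk
      \<and> {kk j + 1 | j. j \<in> {1..r} \<and> b j = 1 \<and> dd (kk j + 1) = 2} = J"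
    using bce_basis_with_pivots[of P k bb dd, OF P bb] unfolding sum pivots .
next
  assume "\<exists>V W r b kk. V \<in> grassmannian s (total_dim k dd) \<and> is_bce_basis k dd s V W r b kk
      \<and> {kk j + 1 | j. j \<in> {1..r} \<and> b j = 1 \<and> dd (kk j + 1) = 2} = J"
  then obtain V W r b kk where bce: "is_bce_basis k dd s V W r b kk"
    and pivots: "{kk j + 1 | j. j \<in> {1..r} \<and> b j = 1 \<and> dd (kk j + 1) = 2} = J"
    by blast
  show "J \<in> calJ k dd s" using bce_pivots_in_calJ[OF bce] unfolding pivots .
qed

end
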